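(* Let $T>0$ and $\beta\in\mathbb{R}$ with $|\beta|<\frac{1}{2T}$. Then the boundary value problem $$\left(\frac{u'}{\sqrt{1+u'^2}}\right)'=\beta\cos u\ \text{on }[0,T],\qquad u(0)=u(T)=u'(T)$$ has at least one solution.
   Context: A solution is a function $u\in C^1([0,T],\mathbb{R})$ satisfying the boundary conditions such that $t\mapsto u'(t)/\sqrt{1+u'(t)^2}$ is continuously differentiable and the equation holds for all $t\in[0,T]$. *)

theory Defs
  imports "HOL-Analysis.Analysis"
begin

definition is_solution :: "real \<Rightarrow> real \<Rightarrow> (real \<Rightarrow> real) \<Rightarrow> bool" where
  "is_solution T \<beta> u \<longleftrightarrow>
     (\<exists>du dphi.
        continuous_on {0..T} du \<and>
        (\<forall>t\<in>{0..T}. (u has_real_derivative du t) (at t within {0..T})) \<and>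
        continuous_on {0..T} dphi \<and>
        (\<forall>t\<in>{0..T}. ((\<lambda>s. du s / sqrt (1 + (du s)\<^sup>2)) has_real_derivative dphi t)
                        (at t within {0..T})) \<and>
        (\<forall>t\<in>{0..T}. dphi t = \<beta> * cos (u t)) \<and>
        u 0 = u T \<and> u T = du T)"

end

theory Submission
  imports Defs
begin

text \<open>
  With v = u'/sqrt(1 + u'^2) the equation becomes the first order system v' = \<beta> cos u,
  u' = v/sqrt(1 - v^2). Prescribing v(T) = a and u(T) = u'(T) turns it into the integral equation
  u = picard a u, which has a unique solution by Banach's fixed point theorem in a Bielecki-weighted
  sup norm; the solution depends continuously on a, and |v - a| \<le> |\<beta>| T. The last boundary
  condition u(0) = u(T) says that the integral of u' over [0,T] vanishes. For a = \<plusminus>|\<beta>| T the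
  function v, and hence u', has constant sign \<plusminus>, so the intermediate value theorem yields a
  suitable a. The hypothesis |\<beta>| < 1/(2T) keeps |v| \<le> 2|\<beta>| T < 1 for |a| \<le> |\<beta>| T, where
  v \<mapsto> v/sqrt(1 - v^2) is defined and Lipschitz; truncating it outside this range makes the
  fixed point problem globally Lipschitz.
\<close>

definition phi_inv :: "real \<Rightarrow> real" where
  "phi_inv x = x / sqrt (1 - x\<^sup>2)"

lemma phi_inv_has_real_derivative:
  assumes "\<bar>x\<bar> < 1"
  shows "(phi_inv has_real_derivative 1 / ((1 - x\<^sup>2) * sqrt (1 - x\<^sup>2))) (at x)"
proof -
  have pos: "0 < 1 - x\<^sup>2"
    using assms by (simp add: abs_square_less_1)
  have sq: "sqrt (1 - x\<^sup>2) * sqrt (1 - x\<^sup>2) = 1 - x\<^sup>2"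
    using pos by simp
  show ?thesis
    unfolding phi_inv_def using pos
    by (auto intro!: derivative_eq_intros) (simp add: field_simps sq power2_eq_square)
qed

lemma phi_inv_inverse:
  assumes "\<bar>x\<bar> < 1"
  shows "phi_inv x / sqrt (1 + (phi_inv x)\<^sup>2) = x"
proof -
  have pos: "0 < 1 - x\<^sup>2"
    using assms by (simp add: abs_square_less_1)
  then have "1 + (phi_inv x)\<^sup>2 = 1 / (1 - x\<^sup>2)"
    by (simp add: phi_inv_def power_divide field_simps)
  with pos show ?thesis
    by (simp add: phi_inv_def real_sqrt_divide)
qed

lemma phi_inv_lipschitz:
  assumes "0 \<le> r" "r < 1"
  shows "(1 / ((1 - r\<^sup>2) * sqrt (1 - r\<^sup>2)))-lipschitz_on {-r..r} phi_inv"
proof (rule lipschitz_onI)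
  have r2: "0 < 1 - r\<^sup>2"
    using assms by (simp add: abs_square_less_1)
  have deriv: "(phi_inv has_real_derivative 1 / ((1 - z\<^sup>2) * sqrt (1 - z\<^sup>2))) (at z within {-r..r})"
    if "z \<in> {-r..r}" for z
    using that assms by (intro DERIV_subset[OF phi_inv_has_real_derivative]) auto
  have deriv_le: "norm (1 / ((1 - z\<^sup>2) * sqrt (1 - z\<^sup>2))) \<le> 1 / ((1 - r\<^sup>2) * sqrt (1 - r\<^sup>2))"
    if "z \<in> {-r..r}" for z
  proof -
    have "1 - r\<^sup>2 \<le> 1 - z\<^sup>2"
      using that by (simp add: abs_le_square_iff[symmetric] abs_le_iff)
    then have "(1 - r\<^sup>2) * sqrt (1 - r\<^sup>2) \<le> (1 - z\<^sup>2) * sqrt (1 - z\<^sup>2)"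
      using r2 by (intro mult_mono) auto
    with r2 show ?thesis
      by (simp add: frac_le)
  qed
  fix x y assume "x \<in> {-r..r}" "y \<in> {-r..r}"
  from field_differentiable_bound[OF convex_real_interval(5) deriv deriv_le this]
  show "dist (phi_inv x) (phi_inv y) \<le> 1 / ((1 - r\<^sup>2) * sqrt (1 - r\<^sup>2)) * dist x y"
    by (simp add: dist_real_def)
next
  show "0 \<le> 1 / ((1 - r\<^sup>2) * sqrt (1 - r\<^sup>2))"
    using assms by (simp add: abs_square_le_1)
qed

lemma phi_inv_nonneg: "0 \<le> x \<Longrightarrow> x < 1 \<Longrightarrow> 0 \<le> phi_inv x"
  unfolding phi_inv_def by (simp add: abs_square_le_1)

lemma phi_inv_nonpos: "-1 < x \<Longrightarrow> x \<le> 0 \<Longrightarrow> phi_inv x \<le> 0"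
  unfolding phi_inv_def by (intro divide_nonpos_nonneg) (auto simp: abs_square_le_1)

lemma abs_cos_diff_le: "\<bar>cos x - cos y\<bar> \<le> \<bar>x - y\<bar>" for x y :: real
proof -
  have "\<bar>cos x - cos y\<bar> = 2 * \<bar>sin ((x + y) / 2)\<bar> * \<bar>sin ((y - x) / 2)\<bar>"
    by (simp add: cos_diff_cos abs_mult)
  also have "\<dots> \<le> 2 * 1 * \<bar>(y - x) / 2\<bar>"
    by (intro mult_mono abs_sin_x_le_abs_x) auto
  finally show ?thesis
    by simp
qed

lemma ext_cont_in_bcontfun:
  fixes f :: "'a::euclidean_space \<Rightarrow> 'b::metric_space"
  assumes "continuous_on (cbox a b) f"
  shows "ext_cont f a b \<in> bcontfun"
proof -
  have "bounded (f ` cbox a b)"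
    using assms by (intro compact_imp_bounded compact_continuous_image) auto
  with assms show ?thesis
    unfolding bcontfun_def ext_cont_def by (auto intro!: clamp_continuous_on clamp_bounded)
qed

lemma integral_exp_weighted_bound:
  fixes f :: "real \<Rightarrow> real"
  assumes "0 < K" "t \<le> T" "f integrable_on {t..T}"
    and bound: "\<And>s. s \<in> {t..T} \<Longrightarrow> \<bar>f s\<bar> \<le> B * exp (K * (T - s))"
  shows "\<bar>integral {t..T} f\<bar> \<le> B * exp (K * (T - t)) / K"
proof -
  have "0 \<le> B * exp (K * (T - t))"
    using bound[of t] assms(2) by (meson abs_ge_zero atLeastAtMost_iff order.trans order_refl)
  then have "0 \<le> B"
    by (simp add: zero_le_mult_iff)
  have primitive: "((\<lambda>s. B * exp (K * (T - s))) has_integral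
      (- B * exp (K * (T - T)) / K) - (- B * exp (K * (T - t)) / K)) {t..T}"
    using assms(1,2)
    by (intro fundamental_theorem_of_calculus)
       (auto intro!: derivative_eq_intros simp: has_real_derivative_iff_has_vector_derivative[symmetric])
  have "\<bar>integral {t..T} f\<bar> \<le> integral {t..T} (\<lambda>s. B * exp (K * (T - s)))"
    using integral_norm_bound_integral[OF assms(3) has_integral_integrable[OF primitive]] bound
    by simp
  also have "\<dots> = B * exp (K * (T - t)) / K - B / K"
    using integral_unique[OF primitive] by simp
  also have "\<dots> \<le> B * exp (K * (T - t)) / K"
    using \<open>0 \<le> B\<close> \<open>0 < K\<close> by simp
  finally show ?thesis .
qed

lemma fixpoint_lipschitz_in_parameter:
  fixes F :: "'p::metric_space \<Rightarrow> 'a::complete_space \<Rightarrow> 'a"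
  assumes "0 \<le> C" "0 \<le> c" "c < 1"
    and contraction: "\<And>p q x y. dist (F p x) (F q y) \<le> C * dist p q + c * dist x y"
  obtains fp where "\<And>p. F p (fp p) = fp p" and "(C / (1 - c))-lipschitz_on UNIV fp"
proof
  define fp where "fp p = (THE x. F p x = x)" for p
  have "\<exists>!x. F p x = x" for p
    using assms contraction[of p _ p] by (intro banach_fix_type[of c]) auto
  then show fixed: "F p (fp p) = fp p" for p
    unfolding fp_def by (rule theI')
  show "(C / (1 - c))-lipschitz_on UNIV fp"
  proof (rule lipschitz_onI)
    fix p q :: 'p
    have "dist (fp p) (fp q) \<le> C * dist p q + c * dist (fp p) (fp q)"
      using contraction[of p "fp p" q "fp q"] by (simp only: fixed)
    then have "(1 - c) * dist (fp p) (fp q) \<le> C * dist p q"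
      by (simp add: algebra_simps)
    then show "dist (fp p) (fp q) \<le> C / (1 - c) * dist p q"
      using \<open>c < 1\<close> by (simp add: field_simps)
  qed (use assms in simp)
qed

locale curvature_bvp =
  fixes T \<beta> r L :: real
  assumes T_nonneg: "0 \<le> T"
    and r_ge: "2 * \<bar>\<beta>\<bar> * T \<le> r"
    and r_less_1: "r < 1"
    and lipschitz_phi_inv: "L-lipschitz_on {-r..r} phi_inv"
begin

lemma r_nonneg: "0 \<le> r"
proof -
  have "0 \<le> 2 * \<bar>\<beta>\<bar> * T"
    using T_nonneg by simp
  with r_ge show ?thesis
    by linarith
qed

lemma L_nonneg: "0 \<le> L"
  using lipschitz_phi_inv by (rule lipschitz_on_nonneg)

definition slope :: "real \<Rightarrow> real" where
  "slope x = phi_inv (max (-r) (min r x))"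

lemma slope_eq_phi_inv: "\<bar>x\<bar> \<le> r \<Longrightarrow> slope x = phi_inv x"
  unfolding slope_def by (simp add: abs_le_iff)

lemma slope_lipschitz: "L-lipschitz_on UNIV slope"
proof -
  have "1-lipschitz_on UNIV (\<lambda>x. max (-r) (min r x))"
    by (rule lipschitz_onI) (auto simp: dist_real_def abs_le_iff)
  moreover have "(\<lambda>x. max (-r) (min r x)) ` UNIV \<subseteq> {-r..r}"
    using r_nonneg by auto
  ultimately have "(L * 1)-lipschitz_on UNIV (\<lambda>x. phi_inv (max (-r) (min r x)))"
    by (intro lipschitz_on_compose2 lipschitz_on_subset[OF lipschitz_phi_inv])
  then show ?thesis
    unfolding slope_def by simp
qed

lemma continuous_on_slope: "continuous_on S slope"
  using lipschitz_on_continuous_on[OF slope_lipschitz] continuous_on_subset by blast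

lemma slope_nonneg: "0 \<le> x \<Longrightarrow> 0 \<le> slope x"
  unfolding slope_def using r_nonneg r_less_1 by (intro phi_inv_nonneg) auto

lemma slope_nonpos: "x \<le> 0 \<Longrightarrow> slope x \<le> 0"
  unfolding slope_def using r_nonneg r_less_1 by (intro phi_inv_nonpos) auto

definition flux :: "real \<Rightarrow> (real \<Rightarrow> real) \<Rightarrow> real \<Rightarrow> real" where
  "flux a u t = a - \<beta> * integral {t..T} (\<lambda>s. cos (u s))"

definition picard :: "real \<Rightarrow> (real \<Rightarrow> real) \<Rightarrow> real \<Rightarrow> real" where
  "picard a u t = slope a - integral {t..T} (\<lambda>s. slope (flux a u s))"

lemma flux_has_real_derivative:
  assumes "continuous_on {0..T} u" "t \<in> {0..T}"
  shows "(flux a u has_real_derivative \<beta> * cos (u t)) (at t within {0..T})"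
proof -
  have "continuous_on {0..T} (\<lambda>s. cos (u s))"
    using assms(1) by (intro continuous_intros)
  from integral_has_real_derivative'[OF this assms(2)]
  show ?thesis
    unfolding flux_def by (auto intro!: derivative_eq_intros)
qed

lemma continuous_on_flux: "continuous_on {0..T} u \<Longrightarrow> continuous_on {0..T} (flux a u)"
  using flux_has_real_derivative DERIV_continuous continuous_on_eq_continuous_within by blast

lemma flux_close_to_param:
  assumes "continuous_on {0..T} u" "t \<in> {0..T}"
  shows "\<bar>flux a u t - a\<bar> \<le> \<bar>\<beta>\<bar> * T"
proof -
  have "continuous_on {t..T} (\<lambda>s. cos (u s))"
    using assms by (intro continuous_intros continuous_on_subset[OF assms(1)]) auto
  then have "\<bar>integral {t..T} (\<lambda>s. cos (u s))\<bar> \<le> T - t"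
    using has_integral_bound_real[OF zero_le_one finite.emptyI integrable_integral,
        OF integrable_continuous_real, of t T "\<lambda>s. cos (u s)"] assms(2)
    by simp
  also have "\<dots> \<le> T"
    using assms(2) by simp
  finally show ?thesis
    unfolding flux_def by (simp add: abs_mult mult_left_mono)
qed

lemma continuous_on_slope_flux:
  "continuous_on {0..T} u \<Longrightarrow> continuous_on {0..T} (\<lambda>s. slope (flux a u s))"
  using continuous_on_compose2[OF continuous_on_slope continuous_on_flux subset_UNIV] .

lemma picard_has_real_derivative:
  assumes "continuous_on {0..T} u" "t \<in> {0..T}"
  shows "(picard a u has_real_derivative slope (flux a u t)) (at t within {0..T})"
  using integral_has_real_derivative'[OF continuous_on_slope_flux[OF assms(1)] assms(2)]
  unfolding picard_def by (auto intro!: derivative_eq_intros)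

lemma continuous_on_picard: "continuous_on {0..T} u \<Longrightarrow> continuous_on {0..T} (picard a u)"
  using picard_has_real_derivative DERIV_continuous continuous_on_eq_continuous_within by blast

definition K :: real where
  "K = 1 + 2 * L * \<bar>\<beta>\<bar>"

definition weight :: "real \<Rightarrow> real" where
  "weight t = exp (K * (T - t))"

lemma K_ge_1: "1 \<le> K"
  unfolding K_def using L_nonneg by simp

lemma continuous_on_weight: "continuous_on S weight"
  unfolding weight_def by (intro continuous_intros)

lemma weight_ge_1: "t \<le> T \<Longrightarrow> 1 \<le> weight t"
  unfolding weight_def using K_ge_1 by simp

lemma K_large:
  assumes "0 \<le> x" "0 \<le> D"
  shows "L * x + L * (x + \<bar>\<beta>\<bar> * D / K) / K \<le> 2 * L * x + D / 2"
proof -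
  have "L * x * 1 \<le> L * x * K"
    using K_ge_1 L_nonneg assms by (intro mult_left_mono) auto
  then have "L * x / K \<le> L * x"
    using K_ge_1 by (simp add: divide_le_eq)
  moreover have "L * (\<bar>\<beta>\<bar> * D / K) / K \<le> D / 2"
  proof -
    have "2 * (L * \<bar>\<beta>\<bar>) \<le> K"
      unfolding K_def by simp
    also have "\<dots> \<le> K * K"
      using mult_left_mono[OF K_ge_1, of K] K_ge_1 by simp
    finally have "2 * (L * \<bar>\<beta>\<bar>) * D \<le> K * K * D"
      using \<open>0 \<le> D\<close> by (rule mult_right_mono)
    then show ?thesis
      using K_ge_1 by (simp add: field_simps)
  qed
  ultimately show ?thesis
    by (simp only: distrib_left add_divide_distrib)
qed

lemma flux_weighted_diff:
  assumes "continuous_on {0..T} u1" "continuous_on {0..T} u2" "t \<in> {0..T}"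
    and close: "\<And>s. s \<in> {0..T} \<Longrightarrow> \<bar>u1 s - u2 s\<bar> \<le> D * weight s"
  shows "\<bar>flux a u1 t - flux b u2 t\<bar> \<le> (\<bar>a - b\<bar> + \<bar>\<beta>\<bar> * D / K) * weight t"
proof -
  have cont: "continuous_on {t..T} (\<lambda>s. cos (u s))" if "continuous_on {0..T} u" for u :: "real \<Rightarrow> real"
    using assms(3) by (intro continuous_intros continuous_on_subset[OF that]) auto
  have diff: "flux a u1 t - flux b u2 t
      = (a - b) - \<beta> * integral {t..T} (\<lambda>s. cos (u1 s) - cos (u2 s))"
    unfolding flux_def
    by (simp add: integral_diff integrable_continuous_real cont assms right_diff_distrib)
  have "\<bar>integral {t..T} (\<lambda>s. cos (u1 s) - cos (u2 s))\<bar> \<le> D * weight t / K"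
    unfolding weight_def
  proof (rule integral_exp_weighted_bound)
    show "(\<lambda>s. cos (u1 s) - cos (u2 s)) integrable_on {t..T}"
      by (intro integrable_continuous_real continuous_on_diff cont assms)
    show "\<bar>cos (u1 s) - cos (u2 s)\<bar> \<le> D * exp (K * (T - s))" if "s \<in> {t..T}" for s
      using abs_cos_diff_le[of "u1 s" "u2 s"] close[of s] that assms(3)
      unfolding weight_def by force
  qed (use assms(3) K_ge_1 in auto)
  then have "\<bar>\<beta> * integral {t..T} (\<lambda>s. cos (u1 s) - cos (u2 s))\<bar> \<le> \<bar>\<beta>\<bar> * (D * weight t / K)"
    unfolding abs_mult by (rule mult_left_mono) simp
  then have "\<bar>flux a u1 t - flux b u2 t\<bar> \<le> \<bar>a - b\<bar> + \<bar>\<beta>\<bar> * (D * weight t / K)"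
    unfolding diff using abs_triangle_ineq4 order_trans add_left_mono by blast
  also have "\<dots> \<le> (\<bar>a - b\<bar> + \<bar>\<beta>\<bar> * D / K) * weight t"
    using weight_ge_1[of t] assms(3) by (simp add: algebra_simps mult_le_cancel_left1)
  finally show ?thesis .
qed

lemma picard_weighted_diff:
  assumes "continuous_on {0..T} u1" "continuous_on {0..T} u2" "t \<in> {0..T}" "0 \<le> D"
    and close: "\<And>s. s \<in> {0..T} \<Longrightarrow> \<bar>u1 s - u2 s\<bar> \<le> D * weight s"
  shows "\<bar>picard a u1 t - picard b u2 t\<bar> \<le> (2 * L * \<bar>a - b\<bar> + D / 2) * weight t"
proof -
  let ?g = "\<lambda>u c s. slope (flux c u s)"
  have cont: "continuous_on {t..T} (?g u c)" if "continuous_on {0..T} u" for u c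
    by (rule continuous_on_subset[OF continuous_on_slope_flux[OF that]]) (use assms(3) in auto)
  have diff: "picard a u1 t - picard b u2 t
      = (slope a - slope b) - integral {t..T} (\<lambda>s. ?g u1 a s - ?g u2 b s)"
    unfolding picard_def by (simp add: integral_diff integrable_continuous_real cont assms)
  have slope_diff: "\<bar>slope x - slope y\<bar> \<le> L * \<bar>x - y\<bar>" for x y
    using lipschitz_onD[OF slope_lipschitz] by (simp add: dist_real_def)
  have integral_le: "\<bar>integral {t..T} (\<lambda>s. ?g u1 a s - ?g u2 b s)\<bar>
      \<le> L * (\<bar>a - b\<bar> + \<bar>\<beta>\<bar> * D / K) * weight t / K"
    unfolding weight_def
  proof (rule integral_exp_weighted_bound)
    show "(\<lambda>s. ?g u1 a s - ?g u2 b s) integrable_on {t..T}"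
      by (intro integrable_continuous_real continuous_on_diff cont assms)
    fix s assume s: "s \<in> {t..T}"
    have "\<bar>?g u1 a s - ?g u2 b s\<bar> \<le> L * \<bar>flux a u1 s - flux b u2 s\<bar>"
      by (rule slope_diff)
    also have "\<dots> \<le> L * ((\<bar>a - b\<bar> + \<bar>\<beta>\<bar> * D / K) * weight s)"
      using s assms(3) L_nonneg by (intro mult_left_mono flux_weighted_diff assms) auto
    finally show "\<bar>?g u1 a s - ?g u2 b s\<bar> \<le> L * (\<bar>a - b\<bar> + \<bar>\<beta>\<bar> * D / K) * exp (K * (T - s))"
      by (simp add: weight_def mult.assoc)
  qed (use assms(3) K_ge_1 in auto)
  have slope_le: "\<bar>slope a - slope b\<bar> \<le> L * \<bar>a - b\<bar> * weight t"
    using slope_diff[of a b] mult_left_mono[OF weight_ge_1, of t "L * \<bar>a - b\<bar>"] assms(3) L_nonneg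
    by simp
  have "\<bar>picard a u1 t - picard b u2 t\<bar>
      \<le> \<bar>slope a - slope b\<bar> + \<bar>integral {t..T} (\<lambda>s. ?g u1 a s - ?g u2 b s)\<bar>"
    unfolding diff by (rule abs_triangle_ineq4)
  also have "\<dots> \<le> (L * \<bar>a - b\<bar> + L * (\<bar>a - b\<bar> + \<bar>\<beta>\<bar> * D / K) / K) * weight t"
    using slope_le integral_le by (simp add: distrib_right)
  also have "\<dots> \<le> (2 * L * \<bar>a - b\<bar> + D / 2) * weight t"
    using K_large[OF abs_ge_zero \<open>0 \<le> D\<close>] by (rule mult_right_mono) (simp add: weight_def)
  finally show ?thesis .
qed

text \<open>Bielecki's trick: conjugated by the weight, picard a becomes a contraction for the sup norm.\<close>

definition picard_bcontfun :: "real \<Rightarrow> (real \<Rightarrow>\<^sub>C real) \<Rightarrow> (real \<Rightarrow>\<^sub>C real)" where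
  "picard_bcontfun a Y = Bcontfun (ext_cont (\<lambda>t. picard a (\<lambda>s. weight s * Y s) t / weight t) 0 T)"

lemma apply_picard_bcontfun:
  "picard_bcontfun a Y t
     = picard a (\<lambda>s. weight s * Y s) (clamp 0 T t) / weight (clamp 0 T t)"
proof -
  have "continuous_on {0..T} (\<lambda>s. weight s * Y s)"
    by (intro continuous_intros continuous_on_weight continuous_on_apply_bcontfun)
  then have "continuous_on {0..T} (\<lambda>t. picard a (\<lambda>s. weight s * Y s) t / weight t)"
    by (intro continuous_intros continuous_on_picard continuous_on_weight) (auto simp: weight_def)
  then have "ext_cont (\<lambda>t. picard a (\<lambda>s. weight s * Y s) t / weight t) 0 T \<in> bcontfun"
    by (intro ext_cont_in_bcontfun) (simp add: cbox_interval)
  then show ?thesis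
    unfolding picard_bcontfun_def by (simp add: Bcontfun_inverse ext_cont_def)
qed

lemma picard_bcontfun_contraction:
  "dist (picard_bcontfun a Y1) (picard_bcontfun b Y2) \<le> 2 * L * dist a b + 1 / 2 * dist Y1 Y2"
proof (rule dist_bound)
  fix t
  define c where "c = clamp 0 T t"
  have c: "c \<in> {0..T}"
    unfolding c_def using T_nonneg clamp_in_interval[of 0 T t] by simp
  have "\<bar>weight s * Y1 s - weight s * Y2 s\<bar> \<le> dist Y1 Y2 * weight s" for s
  proof -
    have "\<bar>weight s * Y1 s - weight s * Y2 s\<bar> = dist (Y1 s) (Y2 s) * weight s"
      by (simp add: weight_def dist_real_def abs_mult flip: right_diff_distrib)
    also have "\<dots> \<le> dist Y1 Y2 * weight s"
      using dist_bounded by (rule mult_right_mono) (simp add: weight_def)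
    finally show ?thesis .
  qed
  with c have "\<bar>picard a (\<lambda>s. weight s * Y1 s) c - picard b (\<lambda>s. weight s * Y2 s) c\<bar>
      \<le> (2 * L * \<bar>a - b\<bar> + dist Y1 Y2 / 2) * weight c"
    by (intro picard_weighted_diff) (auto simp: weight_def intro!: continuous_intros continuous_on_apply_bcontfun)
  then show "dist (picard_bcontfun a Y1 t) (picard_bcontfun b Y2 t)
      \<le> 2 * L * dist a b + 1 / 2 * dist Y1 Y2"
    unfolding apply_picard_bcontfun c_def[symmetric]
    by (simp add: dist_real_def weight_def divide_le_eq flip: diff_divide_distrib)
qed

lemma picard_fixpoints:
  obtains U where "\<And>a t. t \<in> {0..T} \<Longrightarrow> picard a (U a) t = U a t"
    and "\<And>a. continuous_on {0..T} (U a)"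
    and "continuous_on UNIV (\<lambda>a. U a 0)"
proof -
  obtain Y where fixed: "\<And>a. picard_bcontfun a (Y a) = Y a"
    and lipschitz: "(2 * L / (1 - 1 / 2))-lipschitz_on UNIV Y"
    using fixpoint_lipschitz_in_parameter[of "2 * L" "1 / 2" picard_bcontfun]
      L_nonneg picard_bcontfun_contraction by auto
  define U where "U a = (\<lambda>t. weight t * Y a t)" for a
  show ?thesis
  proof
    fix a t :: real
    assume "t \<in> {0..T}"
    then show "picard a (U a) t = U a t"
      using apply_picard_bcontfun[of a "Y a" t] fixed[of a]
      by (simp add: U_def weight_def clamp_cancel_cbox field_simps)
  next
    show "continuous_on {0..T} (U a)" for a
      unfolding U_def weight_def by (intro continuous_intros continuous_on_apply_bcontfun)
  next
    have "continuous_on UNIV Y"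
      using lipschitz by (rule lipschitz_on_continuous_on)
    moreover have "1-lipschitz_on UNIV (\<lambda>Z :: real \<Rightarrow>\<^sub>C real. apply_bcontfun Z 0)"
      by (rule lipschitz_onI) (simp_all add: dist_bounded)
    then have "continuous_on UNIV (\<lambda>Z :: real \<Rightarrow>\<^sub>C real. apply_bcontfun Z 0)"
      by (rule lipschitz_on_continuous_on)
    ultimately show "continuous_on UNIV (\<lambda>a. U a 0)"
      unfolding U_def using continuous_on_compose2[of UNIV _ UNIV Y] by (auto intro!: continuous_intros)
  qed
qed

lemma shooting:
  obtains a u where "\<bar>a\<bar> \<le> \<bar>\<beta>\<bar> * T" and "continuous_on {0..T} u"
    and "\<And>t. t \<in> {0..T} \<Longrightarrow> picard a u t = u t"
    and "integral {0..T} (\<lambda>s. slope (flux a u s)) = 0"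
proof -
  obtain U where fixed: "\<And>a t. t \<in> {0..T} \<Longrightarrow> picard a (U a) t = U a t"
    and cont: "\<And>a. continuous_on {0..T} (U a)"
    and cont_initial: "continuous_on UNIV (\<lambda>a. U a 0)"
    using picard_fixpoints by blast
  define m where "m = \<bar>\<beta>\<bar> * T"
  define h where "h a = integral {0..T} (\<lambda>s. slope (flux a (U a) s))" for a
  have "h = (\<lambda>a. slope a - U a 0)"
  proof
    show "h a = slope a - U a 0" for a
      using fixed[of 0 a] T_nonneg unfolding h_def picard_def by simp
  qed
  then have "continuous_on {-m..m} h"
    using continuous_on_subset[OF cont_initial subset_UNIV]
    by (auto intro!: continuous_intros continuous_on_slope)
  have integrable: "(\<lambda>s. slope (flux a (U a) s)) integrable_on {0..T}" for a
    by (intro integrable_continuous_real continuous_on_slope_flux cont)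
  have "slope (flux (-m) (U (-m)) s) \<le> 0" if "s \<in> {0..T}" for s
    using flux_close_to_param[OF cont[of "-m"] that, of "-m"]
    by (intro slope_nonpos) (simp add: m_def abs_le_iff)
  then have "h (-m) \<le> 0"
    unfolding h_def using integral_le[OF integrable integrable_0, of "-m"] by simp
  moreover have "0 \<le> slope (flux m (U m) s)" if "s \<in> {0..T}" for s
    using flux_close_to_param[OF cont[of m] that, of m]
    by (intro slope_nonneg) (simp add: m_def abs_le_iff)
  then have "0 \<le> h m"
    unfolding h_def using integral_nonneg[OF integrable] by blast
  moreover have "-m \<le> m"
    unfolding m_def using T_nonneg by simp
  ultimately obtain a where "-m \<le> a" "a \<le> m" "h a = 0"
    using IVT'[of h "-m" 0 m] \<open>continuous_on {-m..m} h\<close> by auto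
  with fixed cont show ?thesis
    by (intro that[of a "U a"]) (auto simp: m_def h_def)
qed

lemma is_solution_of_fixpoint:
  assumes "\<bar>a\<bar> \<le> \<bar>\<beta>\<bar> * T" and cont: "continuous_on {0..T} u"
    and fixed: "\<And>t. t \<in> {0..T} \<Longrightarrow> picard a u t = u t"
    and balanced: "integral {0..T} (\<lambda>s. slope (flux a u s)) = 0"
  shows "is_solution T \<beta> u"
  unfolding is_solution_def
proof (intro exI conjI ballI)
  let ?du = "\<lambda>t. slope (flux a u t)"
  have flux_le_r: "\<bar>flux a u t\<bar> \<le> r" if "t \<in> {0..T}" for t
    using flux_close_to_param[OF cont that, of a] abs_triangle_ineq[of "flux a u t - a" a] assms(1) r_ge
    by linarith
  show "continuous_on {0..T} ?du"
    using cont by (rule continuous_on_slope_flux)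
  show "continuous_on {0..T} (\<lambda>t. \<beta> * cos (u t))"
    using cont by (intro continuous_intros)
  fix t assume t: "t \<in> {0..T}"
  show "(u has_real_derivative ?du t) (at t within {0..T})"
    using has_field_derivative_transform_within[OF picard_has_real_derivative[OF cont t] zero_less_one t]
      fixed by blast
  show "((\<lambda>s. ?du s / sqrt (1 + (?du s)\<^sup>2)) has_real_derivative \<beta> * cos (u t)) (at t within {0..T})"
  proof (rule has_field_derivative_transform_within[OF flux_has_real_derivative[OF cont t] zero_less_one t])
    fix s assume "s \<in> {0..T}"
    with flux_le_r[of s] r_less_1 show "flux a u s = ?du s / sqrt (1 + (?du s)\<^sup>2)"
      by (simp add: slope_eq_phi_inv phi_inv_inverse)
  qed
  show "\<beta> * cos (u t) = \<beta> * cos (u t)" ..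
next
  have "u T = slope a"
    using fixed[of T] T_nonneg by (simp add: picard_def)
  moreover have "u 0 = slope a"
    using fixed[of 0] T_nonneg balanced by (simp add: picard_def)
  moreover have "flux a u T = a"
    by (simp add: flux_def)
  ultimately show "u 0 = u T" and "u T = slope (flux a u T)"
    by simp_all
qed

theorem exists_solution: "\<exists>u. is_solution T \<beta> u"
  using shooting is_solution_of_fixpoint by metis

end

theorem mainTheorem9:
  fixes T \<beta> :: real
  assumes "T > 0" and "\<bar>\<beta>\<bar> < 1 / (2 * T)"
  shows "\<exists>u. is_solution T \<beta> u"
proof -
  define r where "r = 2 * \<bar>\<beta>\<bar> * T"
  have "r < 1"
    using assms by (simp add: r_def field_simps)
  moreover have "0 \<le> r"
    using assms by (simp add: r_def)
  ultimately interpret curvature_bvp T \<beta> r "1 / ((1 - r\<^sup>2) * sqrt (1 - r\<^sup>2))"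
    using assms by unfold_locales (auto simp: r_def intro: phi_inv_lipschitz)
  show ?thesis
    by (rule exists_solution)
qed

end
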